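(* Let $m\ge 38$ be even and let $G$ be a graph with maximum spectral radius among all $H(4,3)$-free graphs with $m$ edges and no isolated vertices. Let $\mathbf{x}$ be the Perron vector of $G$, $u^*$ a vertex maximizing $x_{u^*}$, $N = N(u^* )$, and $A_+ = \{v\in N : d_N(v)\ge 1\}$. Then $A_+\neq\emptyset$, i.e. $N(u^* )$ spans at least one edge.
   Context: All graphs are simple and undirected; $\rho(G)$ is the largest adjacency eigenvalue and the Perron vector is the positive unit eigenvector for $\rho(G)$ (the extremal $G$ is connected). $H(4,3)$ is the graph formed by a cycle of length $4$ and a triangle sharing exactly one common vertex. $N(v)$ denotes the neighbourhood of $v$ and $d_S(v)=|N(v)\cap S|$. *)

theory Defs
  imports Complex_Main
begin

definition simple_graph :: "'a set \<Rightarrow> 'a set set \<Rightarrow> bool" where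
  "simple_graph V E \<longleftrightarrow> finite V \<and>
     (\<forall>e\<in>E. \<exists>u v. e = {u, v} \<and> u \<noteq> v \<and> u \<in> V \<and> v \<in> V)"

definition no_isolated :: "'a set \<Rightarrow> 'a set set \<Rightarrow> bool" where
  "no_isolated V E \<longleftrightarrow> (\<forall>v\<in>V. \<exists>u. {u, v} \<in> E)"

definition nbhd :: "'a set \<Rightarrow> 'a set set \<Rightarrow> 'a \<Rightarrow> 'a set" where
  "nbhd V E v = {u \<in> V. {v, u} \<in> E}"

definition adj_eigvec :: "'a set \<Rightarrow> 'a set set \<Rightarrow> real \<Rightarrow> ('a \<Rightarrow> real) \<Rightarrow> bool" where
  "adj_eigvec V E lam x \<longleftrightarrow>
     (\<forall>v\<in>V. (\<Sum>u\<in>V. if {v, u} \<in> E then x u else 0) = lam * x v) \<and>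
     (\<exists>v\<in>V. x v \<noteq> 0)"

definition spectral_radius :: "'a set \<Rightarrow> 'a set set \<Rightarrow> real" where
  "spectral_radius V E = Max {lam. \<exists>x. adj_eigvec V E lam x}"

definition perron_vector :: "'a set \<Rightarrow> 'a set set \<Rightarrow> ('a \<Rightarrow> real) \<Rightarrow> bool" where
  "perron_vector V E x \<longleftrightarrow> adj_eigvec V E (spectral_radius V E) x \<and>
     (\<forall>v\<in>V. x v > 0) \<and> (\<Sum>v\<in>V. (x v)\<^sup>2) = 1"

definition H43_free :: "'a set \<Rightarrow> 'a set set \<Rightarrow> bool" where
  "H43_free V E \<longleftrightarrow> \<not> (\<exists>c a1 a2 a3 b1 b2.
      distinct [c, a1, a2, a3, b1, b2] \<and> set [c, a1, a2, a3, b1, b2] \<subseteq> V \<and>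
      {c, a1} \<in> E \<and> {a1, a2} \<in> E \<and> {a2, a3} \<in> E \<and> {a3, c} \<in> E \<and>
      {c, b1} \<in> E \<and> {b1, b2} \<in> E \<and> {b2, c} \<in> E)"

end

theory Submission
  imports Defs "Jordan_Normal_Form.Char_Poly"
begin

(* If the neighbourhood N of a vertex u maximising the Perron vector x were independent, then
   rho^2 x_u = sum over v in N and w in N(v) of x_w <= x_u * sum_{v in N} deg v <= x_u * m,
   because distinct pairs (v, w) give distinct edges {v, w}; hence rho^2 <= m.  On the other hand
   the book graph with k = (m - 2)/2 pages on the spine {0, 1}, plus a disjoint edge, has m edges,
   is H(4,3)-free and has an eigenvalue lambda with lambda^2 = lambda + 2k > m as soon as k >= 2,
   contradicting the maximality of rho.  So m >= 6 would already suffice. *)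

lemma simple_graph_finite_edges:
  assumes "simple_graph V E"
  shows "finite E"
proof -
  have "E \<subseteq> Pow V" using assms unfolding simple_graph_def by auto
  then show ?thesis using assms finite_subset unfolding simple_graph_def by blast
qed

lemma nbhd_subset: "nbhd V E v \<subseteq> V"
  unfolding nbhd_def by auto

lemma adj_eigvec_iff_nbhd_sum:
  assumes "finite V"
  shows "adj_eigvec V E lam x \<longleftrightarrow>
    (\<forall>v\<in>V. (\<Sum>w\<in>nbhd V E v. x w) = lam * x v) \<and> (\<exists>v\<in>V. x v \<noteq> 0)"
  unfolding adj_eigvec_def nbhd_def by (simp add: sum.inter_filter[OF assms])

definition adjacency_mat :: "'a list \<Rightarrow> 'a set set \<Rightarrow> real mat" where
  "adjacency_mat vs E =
     mat (length vs) (length vs) (\<lambda>(i, j). if {vs ! i, vs ! j} \<in> E then 1 else 0)"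

lemma adj_eigvec_imp_eigenvalue:
  assumes vs: "distinct vs" "set vs = V" and ev: "adj_eigvec V E lam x"
  shows "eigenvalue (adjacency_mat vs E) lam"
proof -
  define n where "n = length vs"
  define y where "y = vec n (\<lambda>i. x (vs ! i))"
  have "(!) vs ` {..<n} = V"
    using vs(2) by (auto simp: n_def in_set_conv_nth)
  then have sum_reindex: "(\<Sum>j<n. f (vs ! j)) = (\<Sum>u\<in>V. f u)" for f :: "'a \<Rightarrow> real"
    using sum.reindex[OF inj_on_nth[OF vs(1)], of "{..<n}" f] by (simp add: n_def)
  have "adjacency_mat vs E *\<^sub>v y = lam \<cdot>\<^sub>v y"
  proof (rule eq_vecI)
    fix i assume "i < dim_vec (lam \<cdot>\<^sub>v y)"
    then have i: "i < n" by (simp add: y_def)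
    have "(adjacency_mat vs E *\<^sub>v y) $ i = (\<Sum>u\<in>V. if {vs ! i, u} \<in> E then x u else 0)"
      using i by (auto simp: adjacency_mat_def y_def scalar_prod_def n_def atLeast0LessThan
          simp flip: sum_reindex intro!: sum.cong)
    also have "\<dots> = lam * x (vs ! i)"
      using ev i vs(2) unfolding adj_eigvec_def n_def by auto
    finally show "(adjacency_mat vs E *\<^sub>v y) $ i = (lam \<cdot>\<^sub>v y) $ i"
      using i by (simp add: y_def)
  qed (simp add: adjacency_mat_def y_def n_def)
  moreover have "y \<noteq> 0\<^sub>v n"
  proof
    assume "y = 0\<^sub>v n"
    obtain u where "u \<in> V" "x u \<noteq> 0" using ev unfolding adj_eigvec_def by blast
    then obtain i where "i < n" "vs ! i = u" using vs(2) by (auto simp: n_def in_set_conv_nth)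
    then show False using \<open>y = 0\<^sub>v n\<close> \<open>x u \<noteq> 0\<close> by (metis index_vec index_zero_vec(1) y_def)
  qed
  ultimately show ?thesis
    unfolding eigenvalue_def eigenvector_def
    by (intro exI[of _ y]) (auto simp: adjacency_mat_def y_def n_def)
qed

lemma finite_adj_eigenvalues:
  assumes "finite V"
  shows "finite {lam. \<exists>x. adj_eigvec V E lam x}"
proof -
  obtain vs where vs: "set vs = V" "distinct vs"
    using finite_distinct_list[OF assms] by blast
  define A where "A = adjacency_mat vs E"
  have A: "A \<in> carrier_mat (length vs) (length vs)"
    by (simp add: A_def adjacency_mat_def)
  have "char_poly A \<noteq> 0"
    using degree_monic_char_poly[OF A] by auto
  moreover have "{lam. \<exists>x. adj_eigvec V E lam x} \<subseteq> {lam. poly (char_poly A) lam = 0}"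
    using adj_eigvec_imp_eigenvalue[OF vs(2,1)] eigenvalue_root_char_poly[OF A]
    by (auto simp: A_def)
  ultimately show ?thesis
    using poly_roots_finite finite_subset by blast
qed

lemma adj_eigenvalue_le_spectral_radius:
  assumes "finite V" "adj_eigvec V E lam x"
  shows "lam \<le> spectral_radius V E"
  unfolding spectral_radius_def using assms by (auto intro: Max_ge finite_adj_eigenvalues)

lemma sum_degree_nbhd_le_card_edges:
  assumes "simple_graph V E"
    and indep: "\<forall>v\<in>nbhd V E u. nbhd V E v \<inter> nbhd V E u = {}"
  shows "(\<Sum>v\<in>nbhd V E u. card (nbhd V E v)) \<le> card E"
proof -
  let ?N = "nbhd V E"
  have fin: "finite (?N v)" for v
    using assms(1) unfolding simple_graph_def by (meson finite_subset nbhd_subset)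
  have "inj_on (\<lambda>(v, w). {v, w}) (Sigma (?N u) ?N)"
  proof (rule inj_onI, clarify)
    fix v w v' w'
    assume v: "v \<in> ?N u" "w \<in> ?N v" "v' \<in> ?N u" and vw: "{v, w} = {v', w'}"
    show "v = v' \<and> w = w'"
    proof (cases "v = v'")
      case False
      then have "w = v'" using vw by (auto simp: doubleton_eq_iff)
      then have "w \<in> ?N v \<inter> ?N u" using v by simp
      then show ?thesis using indep v(1) by simp
    qed (use vw in \<open>auto simp: doubleton_eq_iff\<close>)
  qed
  moreover have "(\<lambda>(v, w). {v, w}) ` Sigma (?N u) ?N \<subseteq> E"
    by (auto simp: nbhd_def)
  ultimately have "card (Sigma (?N u) ?N) \<le> card E"
    by (rule card_inj_on_le[OF _ _ simple_graph_finite_edges[OF assms(1)]])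
  then show ?thesis
    using fin by simp
qed

lemma adj_eigenvalue_sq_le_card_edges:
  assumes G: "simple_graph V E" and ev: "adj_eigvec V E lam x"
    and u: "u \<in> V" "0 < x u" and max: "\<forall>v\<in>V. x v \<le> x u"
    and indep: "\<forall>v\<in>nbhd V E u. nbhd V E v \<inter> nbhd V E u = {}"
  shows "lam\<^sup>2 \<le> card E"
proof -
  let ?N = "nbhd V E"
  have fin: "finite V" using G unfolding simple_graph_def by simp
  have eq: "lam * x v = (\<Sum>w\<in>?N v. x w)" if "v \<in> V" for v
    using ev that unfolding adj_eigvec_iff_nbhd_sum[OF fin] by simp
  have "lam\<^sup>2 * x u = (\<Sum>v\<in>?N u. lam * x v)"
    unfolding power2_eq_square mult.assoc eq[OF u(1)] by (simp add: sum_distrib_left)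
  also have "\<dots> = (\<Sum>v\<in>?N u. \<Sum>w\<in>?N v. x w)"
    using eq nbhd_subset by (meson subsetD sum.cong)
  also have "\<dots> \<le> (\<Sum>v\<in>?N u. \<Sum>w\<in>?N v. x u)"
    using max nbhd_subset by (meson subsetD sum_mono)
  also have "\<dots> = x u * (\<Sum>v\<in>?N u. card (?N v))"
    by (simp add: sum_distrib_left mult.commute)
  also have "\<dots> \<le> x u * card E"
    using sum_degree_nbhd_le_card_edges[OF G indep] u(2) by (simp flip: of_nat_sum)
  finally show ?thesis
    using u(2) by (simp add: mult.commute)
qed

definition book_plus_edge :: "nat \<Rightarrow> nat set set" where
  "book_plus_edge k = insert {k + 2, k + 3}
     (insert {0, 1} ((\<lambda>j. {0, j}) ` {2..k + 1} \<union> (\<lambda>j. {1, j}) ` {2..k + 1}))"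

lemma book_plus_edge_adj:
  "{a, b} \<in> book_plus_edge k \<longleftrightarrow>
     {a, b} = {0, 1} \<or> {a, b} = {k + 2, k + 3} \<or>
     (a \<in> {0, 1} \<and> b \<in> {2..k + 1}) \<or> (b \<in> {0, 1} \<and> a \<in> {2..k + 1})"
proof -
  have page: "{a, b} \<in> (\<lambda>j. {i, j}) ` {2..k + 1} \<longleftrightarrow>
      (a = i \<and> b \<in> {2..k + 1}) \<or> (b = i \<and> a \<in> {2..k + 1})" for i
    by (auto simp: doubleton_eq_iff)
  show ?thesis
    unfolding book_plus_edge_def insert_iff Un_iff singleton_iff empty_iff page by argo
qed

lemma nbhd_book_plus_edge:
  fixes k :: nat
  defines "N \<equiv> nbhd {..k + 3} (book_plus_edge k)"
  shows "v \<in> {0, 1} \<Longrightarrow> N v = {0, 1} - {v} \<union> {2..k + 1}"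
    and "v \<in> {2..k + 1} \<Longrightarrow> N v = {0, 1}"
    and "v \<in> {k + 2, k + 3} \<Longrightarrow> N v = {k + 2, k + 3} - {v}"
  unfolding N_def nbhd_def book_plus_edge_adj by (auto simp: doubleton_eq_iff)

lemma card_book_plus_edge: "card (book_plus_edge k) = 2 * k + 2"
proof -
  let ?P = "{2..k + 1}"
  let ?pages = "(\<lambda>j. {0, j}) ` ?P \<union> (\<lambda>j. {1, j}) ` ?P"
  have inj: "inj_on (\<lambda>j. {i, j}) ?P" for i :: nat
    by (rule inj_onI) (auto simp: doubleton_eq_iff)
  have "(\<lambda>j. {0, j}) ` ?P \<inter> (\<lambda>j. {1, j}) ` ?P = {}"
    by (force simp: doubleton_eq_iff)
  moreover have "card ((\<lambda>j. {i, j}) ` ?P) = k" for i :: nat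
    using card_image[OF inj] by simp
  ultimately have "card ?pages = 2 * k"
    using card_Un_disjoint[of "(\<lambda>j. {0, j}) ` ?P" "(\<lambda>j. {1, j}) ` ?P"] by simp
  moreover have "{0, 1} \<notin> ?pages"
    by (force simp: doubleton_eq_iff)
  moreover have "{k + 2, k + 3} \<notin> insert {0, 1} ?pages"
    by (force simp: doubleton_eq_iff)
  ultimately show ?thesis
    unfolding book_plus_edge_def by simp
qed

lemma simple_graph_book_plus_edge: "simple_graph {..k + 3} (book_plus_edge k)"
  unfolding simple_graph_def
proof (intro conjI ballI)
  fix e assume "e \<in> book_plus_edge k"
  then consider "e = {k + 2, k + 3}" | "e = {0, 1}"
    | j where "j \<in> {2..k + 1}" "e = {0, j}" | j where "j \<in> {2..k + 1}" "e = {1, j}"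
    unfolding book_plus_edge_def by (elim insertE UnE imageE) simp_all
  then show "\<exists>u v. e = {u, v} \<and> u \<noteq> v \<and> u \<in> {..k + 3} \<and> v \<in> {..k + 3}"
  proof cases
    case 1
    show ?thesis by (rule exI[of _ "k + 2"], rule exI[of _ "k + 3"]) (use 1 in simp)
  next
    case 2
    show ?thesis by (rule exI[of _ 0], rule exI[of _ 1]) (use 2 in simp)
  next
    case (3 j)
    show ?thesis by (rule exI[of _ 0], rule exI[of _ j]) (use 3 in simp)
  next
    case (4 j)
    show ?thesis by (rule exI[of _ 1], rule exI[of _ j]) (use 4 in simp)
  qed
qed simp

lemma book_plus_edge_vertex_cases:
  fixes v k :: nat
  assumes "v \<in> {..k + 3}"
  obtains "v \<in> {0, 1}" | "v \<in> {2..k + 1}" | "v \<in> {k + 2, k + 3}"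
  using assms by fastforce

lemma no_isolated_book_plus_edge: "no_isolated {..k + 3} (book_plus_edge k)"
  unfolding no_isolated_def
proof
  fix v assume "v \<in> {..k + 3}"
  then have "nbhd {..k + 3} (book_plus_edge k) v \<noteq> {}"
    by (cases rule: book_plus_edge_vertex_cases) (use nbhd_book_plus_edge in auto)
  then show "\<exists>u. {u, v} \<in> book_plus_edge k"
    by (auto simp: nbhd_def insert_commute)
qed

lemma H43_free_book_plus_edge: "H43_free {..k + 3} (book_plus_edge k)"
  unfolding H43_free_def
proof clarify
  let ?N = "nbhd {..k + 3} (book_plus_edge k)"
  fix c a1 a2 a3 b1 b2
  assume dist: "distinct [c, a1, a2, a3, b1, b2]"
    and V: "set [c, a1, a2, a3, b1, b2] \<subseteq> {..k + 3}"
    and "{c, a1} \<in> book_plus_edge k" "{a1, a2} \<in> book_plus_edge k" "{a3, c} \<in> book_plus_edge k"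
      "{c, b1} \<in> book_plus_edge k" "{b1, b2} \<in> book_plus_edge k" "{b2, c} \<in> book_plus_edge k"
  then have adj: "a1 \<in> ?N c" "a3 \<in> ?N c" "b1 \<in> ?N c" "b2 \<in> ?N c" "a2 \<in> ?N a1" "b2 \<in> ?N b1"
    by (auto simp: nbhd_def insert_commute)
  from V have "c \<in> {..k + 3}" by simp
  then have c: "c \<in> {0, 1}"
  proof (cases rule: book_plus_edge_vertex_cases)
    case 2
    then show ?thesis using adj dist nbhd_book_plus_edge(2)[OF 2] by auto
  next
    case 3
    then show ?thesis using adj dist nbhd_book_plus_edge(3)[OF 3] by auto
  qed
  have page_nbhd: "?N v = {0, 1}" if "v \<in> ?N c" "v \<notin> {0, 1}" for v
  proof (rule nbhd_book_plus_edge(2))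
    show "v \<in> {2..k + 1}"
      using that nbhd_book_plus_edge(1)[OF c, where k = k] by auto
  qed
  have "b1 \<in> {0, 1} \<or> b2 \<in> {0, 1}"
    using adj page_nbhd by blast
  then have "{0, 1} \<subseteq> {c, b1, b2}"
    using c dist by auto
  then have "a1 \<notin> {0, 1}" "a2 \<notin> {0, 1}"
    using dist by auto
  then show False
    using adj page_nbhd by blast
qed

definition book_eigenvalue :: "nat \<Rightarrow> real" where
  "book_eigenvalue k = (1 + sqrt (8 * real k + 1)) / 2"

lemma book_eigenvalue_sq: "(book_eigenvalue k)\<^sup>2 = book_eigenvalue k + 2 * real k"
  unfolding book_eigenvalue_def by (simp add: power2_eq_square field_simps)

lemma book_eigenvalue_pos: "0 < book_eigenvalue k"
  unfolding book_eigenvalue_def by (simp add: add_pos_nonneg)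

lemma book_eigenvalue_gt_2:
  assumes "2 \<le> k"
  shows "2 < book_eigenvalue k"
proof -
  have "sqrt 9 < sqrt (8 * real k + 1)"
    using assms by (subst real_sqrt_less_iff) simp
  then show ?thesis
    unfolding book_eigenvalue_def by simp
qed

definition book_eigvec :: "nat \<Rightarrow> nat \<Rightarrow> real" where
  "book_eigvec k v = (if v \<le> 1 then 1 else if v \<le> k + 1 then 2 / book_eigenvalue k else 0)"

lemma adj_eigvec_book_plus_edge:
  "adj_eigvec {..k + 3} (book_plus_edge k) (book_eigenvalue k) (book_eigvec k)"
  unfolding adj_eigvec_iff_nbhd_sum[OF finite_atMost]
proof (intro conjI ballI)
  let ?lam = "book_eigenvalue k" and ?y = "book_eigvec k"
  have lam: "0 < ?lam" "?lam\<^sup>2 = ?lam + 2 * real k"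
    using book_eigenvalue_pos book_eigenvalue_sq by blast+
  have pages: "(\<Sum>w\<in>{2..k + 1}. ?y w) = real k * (2 / ?lam)"
    by (simp add: book_eigvec_def)
  fix v assume "v \<in> {..k + 3}"
  then show "(\<Sum>w\<in>nbhd {..k + 3} (book_plus_edge k) v. ?y w) = ?lam * ?y v"
  proof (cases rule: book_plus_edge_vertex_cases)
    case 1
    then have "nbhd {..k + 3} (book_plus_edge k) v = insert (1 - v) {2..k + 1}"
      using nbhd_book_plus_edge(1) by auto
    then have "(\<Sum>w\<in>nbhd {..k + 3} (book_plus_edge k) v. ?y w) = 1 + real k * (2 / ?lam)"
      using 1 pages by (auto simp: book_eigvec_def)
    also have "\<dots> = ?lam * ?y v"
      using 1 lam by (auto simp: book_eigvec_def field_simps power2_eq_square)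
    finally show ?thesis .
  next
    case 2
    then show ?thesis
      using lam(1) by (simp add: nbhd_book_plus_edge(2) book_eigvec_def)
  next
    case 3
    have zero: "?y w = 0" if "w \<in> {k + 2, k + 3}" for w
      using that by (auto simp: book_eigvec_def)
    then have "(\<Sum>w\<in>{k + 2, k + 3} - {v}. ?y w) = 0"
      by (intro sum.neutral) blast
    then show ?thesis
      using nbhd_book_plus_edge(3)[OF 3] zero[OF 3] by simp
  qed
next
  show "\<exists>v\<in>{..k + 3}. book_eigvec k v \<noteq> 0"
    by (auto simp: book_eigvec_def)
qed

theorem claim1:
  fixes m :: nat and V :: "nat set" and E :: "nat set set" and x :: "nat \<Rightarrow> real" and ustar :: nat
  assumes "even m" and "m \<ge> 38"
    and "simple_graph V E" and "card E = m" and "no_isolated V E" and "H43_free V E"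
    and "\<forall>V' (E' :: nat set set). simple_graph V' E' \<and> card E' = m \<and> no_isolated V' E' \<and>
            H43_free V' E' \<longrightarrow> spectral_radius V' E' \<le> spectral_radius V E"
    and "perron_vector V E x"
    and "ustar \<in> V" and "\<forall>v\<in>V. x v \<le> x ustar"
  shows "{v \<in> nbhd V E ustar. card (nbhd V E v \<inter> nbhd V E ustar) \<ge> 1} \<noteq> {}"
proof (rule ccontr)
  let ?rho = "spectral_radius V E"
  have fin: "finite V"
    using assms(3) unfolding simple_graph_def by simp
  assume no_edge: "\<not> ?thesis"
  have indep: "\<forall>v\<in>nbhd V E ustar. nbhd V E v \<inter> nbhd V E ustar = {}"
  proof
    fix v assume "v \<in> nbhd V E ustar"
    then have "card (nbhd V E v \<inter> nbhd V E ustar) = 0"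
      using no_edge by auto
    moreover have "finite (nbhd V E v \<inter> nbhd V E ustar)"
      using fin nbhd_subset by (meson finite_Int finite_subset)
    ultimately show "nbhd V E v \<inter> nbhd V E ustar = {}"
      by simp
  qed
  have pv: "adj_eigvec V E ?rho x" "\<forall>v\<in>V. 0 < x v"
    using assms(8) unfolding perron_vector_def by auto
  have rho_sq: "?rho\<^sup>2 \<le> m"
    using adj_eigenvalue_sq_le_card_edges[OF assms(3) pv(1) assms(9) _ assms(10) indep]
      pv(2) assms(4,9) by simp
  define k where "k = m div 2 - 1"
  have m: "m = 2 * k + 2"
    using assms(1,2) by (auto simp: k_def elim!: evenE)
  have "spectral_radius {..k + 3} (book_plus_edge k) \<le> ?rho"
    using assms(7) simple_graph_book_plus_edge card_book_plus_edge no_isolated_book_plus_edge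
      H43_free_book_plus_edge m by simp
  then have "book_eigenvalue k \<le> ?rho"
    using adj_eigenvalue_le_spectral_radius[OF finite_atMost adj_eigvec_book_plus_edge]
    by (rule order_trans[rotated])
  then have "(book_eigenvalue k)\<^sup>2 \<le> ?rho\<^sup>2"
    using book_eigenvalue_pos[of k] by (intro power_mono) auto
  moreover have "2 < book_eigenvalue k"
    using assms(2) m by (intro book_eigenvalue_gt_2) simp
  ultimately show False
    using rho_sq book_eigenvalue_sq[of k] m by simp
qed

end
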